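(* Let $(\mathcal{B}_1,\mathcal{B}_0)$ be a Rota-Baxter operator on a crossed module of Lie groups $(H,G,t,\Phi)$ and let $\mathcal{C}$ be the small category associated with $(H,G,t,\Phi)$. Define $\mathcal{B}:G\times H\to G\times H$ by $$\mathcal{B}(a,p)=\Big(\mathcal{B}_0(a),\ \Phi(\mathcal{B}_0(a))\,\mathcal{B}_1\big(\Phi(\mathcal{B}_0(a)^{-1}a^{-1})p\big)\Big).$$ Then $F=(\mathcal{B},\mathcal{B}_0)$, acting by $\mathcal{B}_0$ on objects and by $\mathcal{B}$ on morphisms, is a functor from $\mathcal{C}$ to $\mathcal{C}$.
   Context: A crossed module of Lie groups is a quadruple $(H,G,t,\Phi)$ where $H,G$ are Lie groups, $t:H\to G$ is a Lie group homomorphism and $\Phi:G\to\mathrm{Aut}(H)$ is a smooth action of $G$ on $H$ by automorphisms such that $\Phi(t(p))q=pqp^{-1}$ and $t(\Phi(a)p)=a\,t(p)\,a^{-1}$ for all $p,q\in H$, $a\in G$. A Rota-Baxter operator on a Lie group $G$ is a smooth map $\mathcal{B}:G\to G$ with $\mathcal{B}(a)\mathcal{B}(b)=\mathcal{B}(a\mathcal{B}(a)b\mathcal{B}(a)^{-1})$ for all $a,b\in G$. A Rota-Baxter operator on a crossed module of Lie groups $(H,G,t,\Phi)$ is a pair $(\mathcal{B}_1,\mathcal{B}_0)$ of smooth maps $\mathcal{B}_1:H\to H$, $\mathcal{B}_0:G\to G$ such that (i) $\mathcal{B}_1,\mathcal{B}_0$ are Rota-Baxter operators on $H$, $G$; (ii)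 $t\circ\mathcal{B}_1=\mathcal{B}_0\circ t$; (iii) $\Phi(\mathcal{B}_0(a))\mathcal{B}_1(p)=\mathcal{B}_1\big(\Phi(a\mathcal{B}_0(a))(p\mathcal{B}_1(p))\cdot\Phi(\mathcal{B}_0(a))\mathcal{B}_1(p)^{-1}\big)$ for all $a\in G,p\in H$. The small category $\mathcal{C}$ associated with $(H,G,t,\Phi)$: objects $\mathcal{C}_0=G$, morphisms $\mathcal{C}_1=G\times H$, source $\mathfrak{s}(a,p)=a$, target $\mathfrak{t}(a,p)=t(p)a$, composition $(a,p)\circ(b,q)=(b,pq)$ whenever $t(q)b=a$, identities $1_a=(a,e_H)$. *)

theory Defs
  imports "HOL-Algebra.Group"
begin

definition crossed_module ::
  "('h, 'x) monoid_scheme \<Rightarrow> ('g, 'y) monoid_scheme \<Rightarrow> ('h \<Rightarrow> 'g) \<Rightarrow> ('g \<Rightarrow> 'h \<Rightarrow> 'h) \<Rightarrow> bool"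
where
  "crossed_module H G t \<Phi> \<longleftrightarrow>
     group H \<and> group G \<and> t \<in> hom H G \<and>
     (\<forall>a\<in>carrier G. \<Phi> a \<in> iso H H) \<and>
     (\<forall>p\<in>carrier H. \<Phi> \<one>\<^bsub>G\<^esub> p = p) \<and>
     (\<forall>a\<in>carrier G. \<forall>b\<in>carrier G. \<forall>p\<in>carrier H. \<Phi> (a \<otimes>\<^bsub>G\<^esub> b) p = \<Phi> a (\<Phi> b p)) \<and>
     (\<forall>p\<in>carrier H. \<forall>q\<in>carrier H. \<Phi> (t p) q = p \<otimes>\<^bsub>H\<^esub> q \<otimes>\<^bsub>H\<^esub> inv\<^bsub>H\<^esub> p) \<and>
     (\<forall>a\<in>carrier G. \<forall>p\<in>carrier H. t (\<Phi> a p) = a \<otimes>\<^bsub>G\<^esub> t p \<otimes>\<^bsub>G\<^esub> inv\<^bsub>G\<^esub> a)"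

definition rota_baxter :: "('g, 'y) monoid_scheme \<Rightarrow> ('g \<Rightarrow> 'g) \<Rightarrow> bool" where
  "rota_baxter G B \<longleftrightarrow>
     (\<forall>a\<in>carrier G. B a \<in> carrier G) \<and>
     (\<forall>a\<in>carrier G. \<forall>b\<in>carrier G.
        B a \<otimes>\<^bsub>G\<^esub> B b = B (a \<otimes>\<^bsub>G\<^esub> B a \<otimes>\<^bsub>G\<^esub> b \<otimes>\<^bsub>G\<^esub> inv\<^bsub>G\<^esub> (B a)))"

definition rota_baxter_cm ::
  "('h, 'x) monoid_scheme \<Rightarrow> ('g, 'y) monoid_scheme \<Rightarrow> ('h \<Rightarrow> 'g) \<Rightarrow> ('g \<Rightarrow> 'h \<Rightarrow> 'h)
    \<Rightarrow> ('h \<Rightarrow> 'h) \<Rightarrow> ('g \<Rightarrow> 'g) \<Rightarrow> bool"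
where
  "rota_baxter_cm H G t \<Phi> B1 B0 \<longleftrightarrow>
     rota_baxter H B1 \<and> rota_baxter G B0 \<and>
     (\<forall>p\<in>carrier H. t (B1 p) = B0 (t p)) \<and>
     (\<forall>a\<in>carrier G. \<forall>p\<in>carrier H.
        \<Phi> (B0 a) (B1 p) =
        B1 (\<Phi> (a \<otimes>\<^bsub>G\<^esub> B0 a) (p \<otimes>\<^bsub>H\<^esub> B1 p) \<otimes>\<^bsub>H\<^esub> inv\<^bsub>H\<^esub> (\<Phi> (B0 a) (B1 p))))"

(* Small categories, given by objects, morphisms, source, target, composition
   ("comp g f" = g \<circ> f, defined when target f = source g) and identities. *)
record ('o, 'm) small_cat =
  Obj :: "'o set"
  Mor :: "'m set"
  src :: "'m \<Rightarrow> 'o"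
  tgt :: "'m \<Rightarrow> 'o"
  comp :: "'m \<Rightarrow> 'm \<Rightarrow> 'm"
  ident :: "'o \<Rightarrow> 'm"

definition is_functor ::
  "('o, 'm) small_cat \<Rightarrow> ('o2, 'm2) small_cat \<Rightarrow> ('o \<Rightarrow> 'o2) \<Rightarrow> ('m \<Rightarrow> 'm2) \<Rightarrow> bool"
where
  "is_functor C D F0 F1 \<longleftrightarrow>
     (\<forall>x\<in>Obj C. F0 x \<in> Obj D) \<and>
     (\<forall>f\<in>Mor C. F1 f \<in> Mor D) \<and>
     (\<forall>f\<in>Mor C. src D (F1 f) = F0 (src C f) \<and> tgt D (F1 f) = F0 (tgt C f)) \<and>
     (\<forall>f\<in>Mor C. \<forall>g\<in>Mor C. tgt C f = src C g \<longrightarrow>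
        F1 (comp C g f) = comp D (F1 g) (F1 f)) \<and>
     (\<forall>x\<in>Obj C. F1 (ident C x) = ident D (F0 x))"

definition assoc_cat ::
  "('h, 'x) monoid_scheme \<Rightarrow> ('g, 'y) monoid_scheme \<Rightarrow> ('h \<Rightarrow> 'g) \<Rightarrow> ('g, 'g \<times> 'h) small_cat"
where
  "assoc_cat H G t =
     \<lparr> Obj = carrier G,
       Mor = carrier G \<times> carrier H,
       src = (\<lambda>(a, p). a),
       tgt = (\<lambda>(a, p). t p \<otimes>\<^bsub>G\<^esub> a),
       comp = (\<lambda>(a, p) (b, q). (b, p \<otimes>\<^bsub>H\<^esub> q)),
       ident = (\<lambda>a. (a, \<one>\<^bsub>H\<^esub>)) \<rparr>"

definition cm_B ::
  "('h, 'x) monoid_scheme \<Rightarrow> ('g, 'y) monoid_scheme \<Rightarrow> ('g \<Rightarrow> 'h \<Rightarrow> 'h)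
    \<Rightarrow> ('h \<Rightarrow> 'h) \<Rightarrow> ('g \<Rightarrow> 'g) \<Rightarrow> 'g \<times> 'h \<Rightarrow> 'g \<times> 'h"
where
  "cm_B H G \<Phi> B1 B0 = (\<lambda>(a, p).
     (B0 a, \<Phi> (B0 a) (B1 (\<Phi> (inv\<^bsub>G\<^esub> (B0 a) \<otimes>\<^bsub>G\<^esub> inv\<^bsub>G\<^esub> a) p))))"

end

theory Submission
  imports Defs
begin

(*
  On objects F is B0, so everything reduces to identities for the H-component
  B'(a, p) = Phi (B0 a) (B1 (Phi (twist a) p)), where twist a = (B0 a)^-1 a^-1. They all come from
  one consequence of the Rota-Baxter identity for B0:
      B0 a * B0 (twist a * g * (twist a)^-1) = B0 (g * a).
  Since t is Phi-equivariant, t (Phi (twist a) p) is such a conjugate, which gives compatibility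
  with targets. For composable (a, p), (b, q), i.e. a = t q * b, the same identity splits B0 a
  as B0 b * B0 (t y) with y = Phi (twist b) q; the Rota-Baxter identity for B1, the relation
  t o B1 = B0 o t and the Peiffer identity Phi (t y) = conjugation by y then turn
  B'(a, p) * B'(b, q) into B'(b, p * q).
*)

lemma (in group) mult_inv_cancel_left:
  "x \<in> carrier G \<Longrightarrow> y \<in> carrier G \<Longrightarrow> x \<otimes> (inv x \<otimes> y) = y"
  by (simp flip: m_assoc)

lemma (in group) inv_mult_cancel_left:
  "x \<in> carrier G \<Longrightarrow> y \<in> carrier G \<Longrightarrow> inv x \<otimes> (x \<otimes> y) = y"
  by (simp flip: m_assoc)

lemma (in group) rota_baxter_one:
  assumes "rota_baxter G B"
  shows "B \<one> = \<one>"
proof -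
  have B_closed: "B \<one> \<in> carrier G" and "B \<one> \<otimes> B \<one> = B (\<one> \<otimes> B \<one> \<otimes> \<one> \<otimes> inv (B \<one>))"
    using assms unfolding rota_baxter_def by auto
  then have "B \<one> \<otimes> B \<one> = B \<one>"
    by (simp add: m_assoc)
  with B_closed show ?thesis
    by simp
qed

lemma (in group) rota_baxter_mult_conj:
  assumes "rota_baxter G B" and a: "a \<in> carrier G" and g: "g \<in> carrier G"
  shows "B a \<otimes> B (inv (B a) \<otimes> inv a \<otimes> g \<otimes> a \<otimes> B a) = B (g \<otimes> a)"
proof -
  have Ba: "B a \<in> carrier G"
    using assms unfolding rota_baxter_def by auto
  then have "a \<otimes> B a \<otimes> (inv (B a) \<otimes> inv a \<otimes> g \<otimes> a \<otimes> B a) \<otimes> inv (B a) = g \<otimes> a"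
    using a g by (simp add: m_assoc mult_inv_cancel_left)
  then show ?thesis
    using assms Ba unfolding rota_baxter_def by (metis inv_closed m_closed)
qed

locale crossed_module_rota_baxter =
  fixes H :: "('h, 'x) monoid_scheme" and G :: "('g, 'y) monoid_scheme"
    and t :: "'h \<Rightarrow> 'g" and \<Phi> :: "'g \<Rightarrow> 'h \<Rightarrow> 'h"
    and B1 :: "'h \<Rightarrow> 'h" and B0 :: "'g \<Rightarrow> 'g"
  assumes crossed_module: "crossed_module H G t \<Phi>"
    and rota_baxter_H: "rota_baxter H B1"
    and rota_baxter_G: "rota_baxter G B0"
    and t_B1: "p \<in> carrier H \<Longrightarrow> t (B1 p) = B0 (t p)"
begin

sublocale H: group H
  using crossed_module unfolding crossed_module_def by simp

sublocale G: group G
  using crossed_module unfolding crossed_module_def by simp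

sublocale t: group_hom H G t
  using crossed_module unfolding crossed_module_def by unfold_locales simp

lemma group_hom_Phi: "a \<in> carrier G \<Longrightarrow> group_hom H H (\<Phi> a)"
  using crossed_module unfolding crossed_module_def iso_def by unfold_locales auto

lemma Phi_closed [simp]: "a \<in> carrier G \<Longrightarrow> p \<in> carrier H \<Longrightarrow> \<Phi> a p \<in> carrier H"
  using group_hom.hom_closed[OF group_hom_Phi] .

lemma Phi_mult:
  "a \<in> carrier G \<Longrightarrow> p \<in> carrier H \<Longrightarrow> q \<in> carrier H \<Longrightarrow>
    \<Phi> a (p \<otimes>\<^bsub>H\<^esub> q) = \<Phi> a p \<otimes>\<^bsub>H\<^esub> \<Phi> a q"
  using group_hom.hom_mult[OF group_hom_Phi] .

lemma Phi_one: "a \<in> carrier G \<Longrightarrow> \<Phi> a \<one>\<^bsub>H\<^esub> = \<one>\<^bsub>H\<^esub>"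
  using group_hom.hom_one[OF group_hom_Phi] .

lemma Phi_mult_action:
  "a \<in> carrier G \<Longrightarrow> b \<in> carrier G \<Longrightarrow> p \<in> carrier H \<Longrightarrow> \<Phi> (a \<otimes>\<^bsub>G\<^esub> b) p = \<Phi> a (\<Phi> b p)"
  using crossed_module unfolding crossed_module_def by simp

lemma Phi_t:
  "p \<in> carrier H \<Longrightarrow> q \<in> carrier H \<Longrightarrow> \<Phi> (t p) q = p \<otimes>\<^bsub>H\<^esub> q \<otimes>\<^bsub>H\<^esub> inv\<^bsub>H\<^esub> p"
  using crossed_module unfolding crossed_module_def by simp

lemma t_Phi:
  "a \<in> carrier G \<Longrightarrow> p \<in> carrier H \<Longrightarrow> t (\<Phi> a p) = a \<otimes>\<^bsub>G\<^esub> t p \<otimes>\<^bsub>G\<^esub> inv\<^bsub>G\<^esub> a"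
  using crossed_module unfolding crossed_module_def by simp

lemma B0_closed [simp]: "a \<in> carrier G \<Longrightarrow> B0 a \<in> carrier G"
  using rota_baxter_G unfolding rota_baxter_def by simp

lemma B1_closed [simp]: "p \<in> carrier H \<Longrightarrow> B1 p \<in> carrier H"
  using rota_baxter_H unfolding rota_baxter_def by simp

lemma B1_mult:
  "p \<in> carrier H \<Longrightarrow> q \<in> carrier H \<Longrightarrow>
    B1 p \<otimes>\<^bsub>H\<^esub> B1 q = B1 (p \<otimes>\<^bsub>H\<^esub> B1 p \<otimes>\<^bsub>H\<^esub> q \<otimes>\<^bsub>H\<^esub> inv\<^bsub>H\<^esub> (B1 p))"
  using rota_baxter_H unfolding rota_baxter_def by simp

definition twist :: "'g \<Rightarrow> 'g" where
  "twist a = inv\<^bsub>G\<^esub> (B0 a) \<otimes>\<^bsub>G\<^esub> inv\<^bsub>G\<^esub> a"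

definition cm_B_snd :: "'g \<Rightarrow> 'h \<Rightarrow> 'h" where
  "cm_B_snd a p = \<Phi> (B0 a) (B1 (\<Phi> (twist a) p))"

lemma cm_B_apply: "cm_B H G \<Phi> B1 B0 (a, p) = (B0 a, cm_B_snd a p)"
  by (simp add: cm_B_def cm_B_snd_def twist_def)

lemma twist_closed [simp]: "a \<in> carrier G \<Longrightarrow> twist a \<in> carrier G"
  by (simp add: twist_def)

lemma cm_B_snd_closed: "a \<in> carrier G \<Longrightarrow> p \<in> carrier H \<Longrightarrow> cm_B_snd a p \<in> carrier H"
  by (simp add: cm_B_snd_def)

lemma B0_mult_twist:
  assumes "a \<in> carrier G" and "p \<in> carrier H"
  shows "B0 a \<otimes>\<^bsub>G\<^esub> B0 (t (\<Phi> (twist a) p)) = B0 (t p \<otimes>\<^bsub>G\<^esub> a)"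
  using G.rota_baxter_mult_conj[OF rota_baxter_G, of a "t p"] assms
  by (simp add: t_Phi twist_def G.m_assoc G.inv_mult_group)

lemma cm_B_snd_one: "a \<in> carrier G \<Longrightarrow> cm_B_snd a \<one>\<^bsub>H\<^esub> = \<one>\<^bsub>H\<^esub>"
  by (simp add: cm_B_snd_def Phi_one H.rota_baxter_one[OF rota_baxter_H])

lemma t_cm_B_snd:
  assumes "a \<in> carrier G" and "p \<in> carrier H"
  shows "t (cm_B_snd a p) \<otimes>\<^bsub>G\<^esub> B0 a = B0 (t p \<otimes>\<^bsub>G\<^esub> a)"
  using assms B0_mult_twist[OF assms]
  by (simp add: cm_B_snd_def t_Phi t_B1 G.m_assoc G.inv_mult_cancel_left)

lemma cm_B_snd_mult:
  assumes b: "b \<in> carrier G" and p: "p \<in> carrier H" and q: "q \<in> carrier H"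
  defines "a \<equiv> t q \<otimes>\<^bsub>G\<^esub> b"
  shows "cm_B_snd b (p \<otimes>\<^bsub>H\<^esub> q) = cm_B_snd a p \<otimes>\<^bsub>H\<^esub> cm_B_snd b q"
proof -
  define x where "x = \<Phi> (twist a) p"
  define y where "y = \<Phi> (twist b) q"
  have a: "a \<in> carrier G" and x: "x \<in> carrier H" and y: "y \<in> carrier H"
    using b p q by (simp_all add: a_def x_def y_def)
  have Bty: "B0 (t y) \<in> carrier G"
    using y by simp
  have B0_a: "B0 a = B0 b \<otimes>\<^bsub>G\<^esub> B0 (t y)"
    using B0_mult_twist[OF b q] by (simp add: a_def y_def)
  have twist_a: "B0 (t y) \<otimes>\<^bsub>G\<^esub> twist a = twist b \<otimes>\<^bsub>G\<^esub> t (inv\<^bsub>H\<^esub> q)"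
  proof -
    have "B0 (t y) = inv\<^bsub>G\<^esub> (B0 b) \<otimes>\<^bsub>G\<^esub> B0 a"
      using B0_a b Bty by (simp add: G.inv_mult_cancel_left)
    then show ?thesis
      using a b q by (simp add: a_def twist_def G.m_assoc G.inv_mult_group G.mult_inv_cancel_left)
  qed
  have "\<Phi> (B0 (t y)) x = \<Phi> (twist b) (\<Phi> (t (inv\<^bsub>H\<^esub> q)) p)"
    using a b p q Bty by (simp add: x_def twist_a flip: Phi_mult_action)
  also have "\<Phi> (t (inv\<^bsub>H\<^esub> q)) p = inv\<^bsub>H\<^esub> q \<otimes>\<^bsub>H\<^esub> p \<otimes>\<^bsub>H\<^esub> q"
    using p q Phi_t[of "inv\<^bsub>H\<^esub> q" p] by simp
  finally have Phi_twist_mult: "y \<otimes>\<^bsub>H\<^esub> \<Phi> (B0 (t y)) x = \<Phi> (twist b) (p \<otimes>\<^bsub>H\<^esub> q)"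
    using b p q by (simp add: y_def H.m_assoc H.mult_inv_cancel_left flip: Phi_mult)
  have "cm_B_snd a p = \<Phi> (B0 b) (B1 y \<otimes>\<^bsub>H\<^esub> B1 x \<otimes>\<^bsub>H\<^esub> inv\<^bsub>H\<^esub> B1 y)"
    using b x y Bty by (simp add: cm_B_snd_def B0_a Phi_mult_action Phi_t flip: x_def t_B1)
  then have "cm_B_snd a p \<otimes>\<^bsub>H\<^esub> cm_B_snd b q = \<Phi> (B0 b) (B1 y \<otimes>\<^bsub>H\<^esub> B1 x)"
    using b x y by (simp add: cm_B_snd_def H.m_assoc flip: y_def Phi_mult)
  also have "B1 y \<otimes>\<^bsub>H\<^esub> B1 x = B1 (y \<otimes>\<^bsub>H\<^esub> \<Phi> (B0 (t y)) x)"
    using x y by (simp add: B1_mult Phi_t H.m_assoc flip: t_B1)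
  finally show ?thesis
    by (simp add: cm_B_snd_def Phi_twist_mult)
qed

theorem is_functor_cm_B: "is_functor (assoc_cat H G t) (assoc_cat H G t) B0 (cm_B H G \<Phi> B1 B0)"
  unfolding is_functor_def assoc_cat_def
  by (auto simp: cm_B_apply cm_B_snd_closed t_cm_B_snd cm_B_snd_mult cm_B_snd_one)

end

theorem mainTheorem6:
  assumes "crossed_module H G t \<Phi>"
    and "rota_baxter_cm H G t \<Phi> B1 B0"
  shows "is_functor (assoc_cat H G t) (assoc_cat H G t) B0 (cm_B H G \<Phi> B1 B0)"
proof -
  interpret crossed_module_rota_baxter H G t \<Phi> B1 B0
    using assms unfolding rota_baxter_cm_def by unfold_locales auto
  show ?thesis
    by (rule is_functor_cm_B)
qed

end
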